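(* Let $A=(a_{ij})\in\mathbb{Z}^{d\times n}$ with $\Delta:=\max_{i,j}|a_{ij}|\ge 1$, $b\in\mathbb{Z}^d$, $u\in\mathbb{Z}^n_{\ge0}$, $U:=\sum_{j=1}^n u_j$, and $$M:=\Delta U+\max(\|b\|_\infty,\|u\|_\infty)+\Delta+2.$$ Then a vector $(x,s)\in\mathbb{Z}^{n}_{\ge0}\times\mathbb{Z}^{n+1}_{\ge 0}$ (with $x=(x_1,\dots,x_n)$, $s=(s_1,\dots,s_{n+1})$) satisfies the system $$\sum_{j=1}^n a_{ij}x_j=b_i\ (i\in[d]),\qquad x_j+s_j=u_j\ (j\in[n]),\qquad \sum_{j=1}^n(x_j+s_j)+s_{n+1}=U$$ if and only if it satisfies the single equation $$\sum_{i=1}^d M^{i-1}\sum_{j=1}^n a_{ij}x_j+\sum_{j=1}^n M^{d+j-1}(x_j+s_j)+M^{d+n}\Big(\sum_{j=1}^n(x_j+s_j)+s_{n+1}\Big)=\sum_{i=1}^d M^{i-1}b_i+\sum_{j=1}^n M^{d+j-1}u_j+M^{d+n}U.$$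
   Context: $[n]=\{1,\dots,n\}$. The system encodes the ILP constraints $Ax=b$, $0\le x\le u$ with slack variables $s_j$. *)

theory Defs
  imports Main
begin

text \<open>Matrices/vectors are functions on 1-based indices; only the values on
  i in {1..d}, j in {1..n} (resp. {1..n+1} for s) matter.\<close>

definition maxabs_entry :: "(nat \<Rightarrow> nat \<Rightarrow> int) \<Rightarrow> nat \<Rightarrow> nat \<Rightarrow> int" where
  "maxabs_entry A d n = Max {\<bar>A i j\<bar> | i j. i \<in> {1..d} \<and> j \<in> {1..n}}"

definition supnorm :: "(nat \<Rightarrow> int) \<Rightarrow> nat \<Rightarrow> int" where
  "supnorm v k = Max ((\<lambda>i. \<bar>v i\<bar>) ` {1..k})"

end

theory Submission
  imports Defs
begin

text \<open>Both sides of the aggregated equation are base-M expansions with d + n + 1 digit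
  positions: the row values, the sums x_j + s_j and the total. A base-M expansion whose digits
  all have absolute value below M vanishes only if every digit does, so the equivalence follows
  once the differences of corresponding digits are bounded by M. Such bounds require
  x_1 + ... + x_n \<le> U, and this comes first: the row block of the left side is at least
  -(M^d - 1)(x_1 + ... + x_n), which the block of the x_j + s_j more than compensates, while the
  right side is below M^(d+n)(U + 1); so the top coefficient of the left side is at most U.\<close>

lemma abs_le_maxabs_entry:
  assumes "i \<in> {1..d}" "j \<in> {1..n}"
  shows "\<bar>A i j\<bar> \<le> maxabs_entry A d n"
proof -
  have "finite {\<bar>A i j\<bar> | i j. i \<in> {1..d} \<and> j \<in> {1..n}}"
    by (rule finite_image_set2) auto
  then show ?thesis
    unfolding maxabs_entry_def by (rule Max_ge) (use assms in blast)
qed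

lemma abs_le_supnorm:
  assumes "i \<in> {1..k}"
  shows "\<bar>v i\<bar> \<le> supnorm v k"
  unfolding supnorm_def using assms by simp

lemma abs_sum_mult_le:
  fixes a x :: "'b \<Rightarrow> 'a::linordered_idom"
  assumes "\<forall>j\<in>J. \<bar>a j\<bar> \<le> D" and "\<forall>j\<in>J. 0 \<le> x j"
  shows "\<bar>\<Sum>j\<in>J. a j * x j\<bar> \<le> D * (\<Sum>j\<in>J. x j)"
proof -
  have "\<bar>\<Sum>j\<in>J. a j * x j\<bar> \<le> (\<Sum>j\<in>J. \<bar>a j\<bar> * x j)"
    using sum_abs[of "\<lambda>j. a j * x j" J] assms(2) by (simp add: abs_mult)
  also have "\<dots> \<le> (\<Sum>j\<in>J. D * x j)"
    using assms by (intro sum_mono mult_right_mono) auto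
  finally show ?thesis by (simp add: sum_distrib_left)
qed

lemma sum_powers_shift:
  fixes M :: "'a::comm_semiring_1"
  shows "(\<Sum>j=1..n. M ^ (m + j - 1) * c j) = M ^ m * (\<Sum>j=1..n. M ^ (j - 1) * c j)"
  unfolding sum_distrib_left
  by (rule sum.cong) (auto simp: power_add mult.assoc dest!: Suc_le_D)

lemma abs_sum_powers_le:
  fixes M K :: "'a::linordered_idom"
  assumes "0 \<le> M" and "\<forall>i\<in>{1..N}. \<bar>c i\<bar> \<le> (M - 1) * K"
  shows "\<bar>\<Sum>i=1..N. M ^ (i - 1) * c i\<bar> \<le> (M ^ N - 1) * K"
  using assms(2)
proof (induction N)
  case 0
  then show ?case by simp
next
  case (Suc N)
  have "\<bar>\<Sum>i=1..Suc N. M ^ (i - 1) * c i\<bar> \<le> \<bar>\<Sum>i=1..N. M ^ (i - 1) * c i\<bar> + M ^ N * \<bar>c (Suc N)\<bar>"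
    using abs_triangle_ineq[of "\<Sum>i=1..N. M ^ (i - 1) * c i" "M ^ N * c (Suc N)"] assms(1)
    by (simp add: abs_mult)
  also have "\<dots> \<le> (M ^ N - 1) * K + M ^ N * ((M - 1) * K)"
    using Suc assms(1) by (intro add_mono mult_left_mono) auto
  also have "\<dots> = (M ^ Suc N - 1) * K"
    by (simp add: algebra_simps)
  finally show ?case .
qed

lemma add_mult_eq_0_iff:
  fixes c q M :: int
  assumes "\<bar>c\<bar> < M"
  shows "c + M * q = 0 \<longleftrightarrow> c = 0 \<and> q = 0"
proof
  assume "c + M * q = 0"
  moreover have "M \<le> \<bar>M * q\<bar>" if "q \<noteq> 0"
  proof -
    have "\<bar>M\<bar> * 1 \<le> \<bar>M\<bar> * \<bar>q\<bar>"
      using that by (intro mult_left_mono) auto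
    then show ?thesis by (simp add: abs_mult)
  qed
  ultimately show "c = 0 \<and> q = 0"
    using assms by (cases "q = 0") auto
qed simp

lemma sum_powers_add_eq_0_iff:
  fixes M q :: int
  assumes "\<forall>i\<in>{1..N}. \<bar>c i\<bar> < M"
  shows "(\<Sum>i=1..N. M ^ (i - 1) * c i) + M ^ N * q = 0 \<longleftrightarrow> (\<forall>i\<in>{1..N}. c i = 0) \<and> q = 0"
  using assms
proof (induction N arbitrary: q)
  case 0
  then show ?case by simp
next
  case (Suc N)
  have "(\<Sum>i=1..Suc N. M ^ (i - 1) * c i) + M ^ Suc N * q
      = (\<Sum>i=1..N. M ^ (i - 1) * c i) + M ^ N * (c (Suc N) + M * q)"
    by (simp add: algebra_simps)
  also have "\<dots> = 0 \<longleftrightarrow> (\<forall>i\<in>{1..N}. c i = 0) \<and> c (Suc N) + M * q = 0"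
    using Suc by simp
  also have "\<dots> \<longleftrightarrow> (\<forall>i\<in>{1..Suc N}. c i = 0) \<and> q = 0"
    using add_mult_eq_0_iff[of "c (Suc N)" M q] Suc.prems by (auto simp: atLeastAtMostSuc_conv)
  finally show ?case .
qed

definition aggregate :: "int \<Rightarrow> nat \<Rightarrow> nat \<Rightarrow> (nat \<Rightarrow> int) \<Rightarrow> (nat \<Rightarrow> int) \<Rightarrow> int \<Rightarrow> int" where
  "aggregate M d n r y t =
     (\<Sum>i=1..d. M ^ (i - 1) * r i) + (\<Sum>j=1..n. M ^ (d + j - 1) * y j) + M ^ (d + n) * t"

lemma aggregate_eq_iff:
  assumes "\<forall>i\<in>{1..d}. \<bar>r i - r' i\<bar> < M" and "\<forall>j\<in>{1..n}. \<bar>y j - y' j\<bar> < M"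
  shows "aggregate M d n r y t = aggregate M d n r' y' t'
    \<longleftrightarrow> (\<forall>i\<in>{1..d}. r i = r' i) \<and> (\<forall>j\<in>{1..n}. y j = y' j) \<and> t = t'"
proof -
  have "aggregate M d n r y t - aggregate M d n r' y' t'
      = (\<Sum>i=1..d. M ^ (i - 1) * (r i - r' i))
        + M ^ d * ((\<Sum>j=1..n. M ^ (j - 1) * (y j - y' j)) + M ^ n * (t - t'))"
    unfolding aggregate_def sum_powers_shift by (simp add: sum_subtractf algebra_simps power_add)
  then have "aggregate M d n r y t = aggregate M d n r' y' t'
      \<longleftrightarrow> (\<Sum>i=1..d. M ^ (i - 1) * (r i - r' i))
        + M ^ d * ((\<Sum>j=1..n. M ^ (j - 1) * (y j - y' j)) + M ^ n * (t - t')) = 0"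
    by (metis eq_iff_diff_eq_0)
  also have "\<dots> \<longleftrightarrow> (\<forall>i\<in>{1..d}. r i - r' i = 0)
      \<and> (\<Sum>j=1..n. M ^ (j - 1) * (y j - y' j)) + M ^ n * (t - t') = 0"
    using assms(1) by (rule sum_powers_add_eq_0_iff)
  also have "\<dots> \<longleftrightarrow> (\<forall>i\<in>{1..d}. r i - r' i = 0) \<and> (\<forall>j\<in>{1..n}. y j - y' j = 0) \<and> t - t' = 0"
    using sum_powers_add_eq_0_iff[OF assms(2)] by simp
  finally show ?thesis
    by simp
qed

lemma aggregate_eq_imp_le:
  fixes A :: "nat \<Rightarrow> nat \<Rightarrow> int"
  assumes "1 \<le> M"
    and "\<forall>i\<in>{1..d}. \<forall>j\<in>{1..n}. \<bar>A i j\<bar> \<le> M - 1"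
    and "\<forall>i\<in>{1..d}. \<bar>b i\<bar> \<le> M - 1" and "\<forall>j\<in>{1..n}. \<bar>u j\<bar> \<le> M - 1"
    and "\<forall>j\<in>{1..n}. 0 \<le> x j \<and> x j \<le> y j"
    and "aggregate M d n (\<lambda>i. \<Sum>j=1..n. A i j * x j) y t = aggregate M d n b u t'"
  shows "t \<le> t'"
proof -
  define X where "X = (\<Sum>j=1..n. x j)"
  have "0 \<le> X"
    unfolding X_def using assms(5) by (intro sum_nonneg) auto
  have "\<bar>\<Sum>j=1..n. A i j * x j\<bar> \<le> (M - 1) * X" if "i \<in> {1..d}" for i
    unfolding X_def using assms(2,5) that by (intro abs_sum_mult_le) auto
  then have rows: "- ((M ^ d - 1) * X) \<le> (\<Sum>i=1..d. M ^ (i - 1) * (\<Sum>j=1..n. A i j * x j))"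
    using abs_sum_powers_le[of M d "\<lambda>i. \<Sum>j=1..n. A i j * x j" X] assms(1) by auto
  have "X \<le> (\<Sum>j=1..n. M ^ (j - 1) * y j)"
    unfolding X_def
  proof (rule sum_mono)
    fix j assume "j \<in> {1..n}"
    then have "0 \<le> x j" "x j \<le> y j"
      using assms(5) by auto
    moreover have "1 * y j \<le> M ^ (j - 1) * y j"
      using assms(1) calculation by (intro mult_right_mono one_le_power) auto
    ultimately show "x j \<le> M ^ (j - 1) * y j" by linarith
  qed
  then have upper: "M ^ d * X \<le> (\<Sum>j=1..n. M ^ (d + j - 1) * y j)"
    unfolding sum_powers_shift using assms(1) by (simp add: mult_left_mono)
  have "(\<Sum>i=1..d. M ^ (i - 1) * b i) \<le> M ^ d - 1"
    using abs_sum_powers_le[of M d b 1] assms(1,3) by simp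
  moreover have "M ^ d * (\<Sum>j=1..n. M ^ (j - 1) * u j) \<le> M ^ d * (M ^ n - 1)"
    using abs_sum_powers_le[of M n u 1] assms(1,4) by (intro mult_left_mono) auto
  ultimately have "aggregate M d n b u t' \<le> M ^ d - 1 + M ^ d * (M ^ n - 1) + M ^ (d + n) * t'"
    unfolding aggregate_def sum_powers_shift by linarith
  also have "\<dots> < M ^ (d + n) * (t' + 1)"
    by (simp add: power_add algebra_simps)
  finally have "M ^ (d + n) * t < M ^ (d + n) * (t' + 1)"
    using rows upper \<open>0 \<le> X\<close> assms(6) unfolding aggregate_def by (simp add: algebra_simps)
  then show ?thesis
    using assms(1) by (simp add: mult_less_cancel_left_pos)
qed

lemma system_iff_aggregate:
  fixes A :: "nat \<Rightarrow> nat \<Rightarrow> int"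
  assumes "0 \<le> D" "D \<le> M - 1" "0 \<le> U" "U < M"
    and "\<forall>i\<in>{1..d}. \<forall>j\<in>{1..n}. \<bar>A i j\<bar> \<le> D"
    and "\<forall>i\<in>{1..d}. D * U + \<bar>b i\<bar> < M"
    and "\<forall>j\<in>{1..n}. 0 \<le> u j \<and> u j < M"
    and "\<forall>j\<in>{1..n}. 0 \<le> x j \<and> x j \<le> y j" and "(\<Sum>j=1..n. y j) \<le> t"
  shows "(\<forall>i\<in>{1..d}. (\<Sum>j=1..n. A i j * x j) = b i) \<and> (\<forall>j\<in>{1..n}. y j = u j) \<and> t = U
    \<longleftrightarrow> aggregate M d n (\<lambda>i. \<Sum>j=1..n. A i j * x j) y t = aggregate M d n b u U"
proof (cases "t \<le> U")
  case True
  with assms(9) have "(\<Sum>j=1..n. y j) \<le> U"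
    by linarith
  then have "(\<Sum>j=1..n. x j) \<le> U"
    using sum_mono[of "{1..n}" x y] assms(8) by auto
  have "\<bar>(\<Sum>j=1..n. A i j * x j) - b i\<bar> < M" if "i \<in> {1..d}" for i
  proof -
    have "\<bar>\<Sum>j=1..n. A i j * x j\<bar> \<le> D * (\<Sum>j=1..n. x j)"
      using assms(5,8) that by (intro abs_sum_mult_le) auto
    also have "\<dots> \<le> D * U"
      using \<open>(\<Sum>j=1..n. x j) \<le> U\<close> assms(1) by (intro mult_left_mono)
    finally show ?thesis
      using assms(6) that by fastforce
  qed
  moreover have "\<bar>y j - u j\<bar> < M" if "j \<in> {1..n}" for j
  proof -
    have "y j \<le> (\<Sum>j=1..n. y j)"
      using assms(8) that by (intro member_le_sum) fastforce+
    then show ?thesis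
      using \<open>(\<Sum>j=1..n. y j) \<le> U\<close> assms(4,7,8) that by fastforce
  qed
  ultimately show ?thesis
    by (simp add: aggregate_eq_iff)
next
  case False
  have "0 \<le> D * U"
    using assms(1,3) by simp
  then have "1 \<le> M" "\<forall>i\<in>{1..d}. \<forall>j\<in>{1..n}. \<bar>A i j\<bar> \<le> M - 1"
    "\<forall>i\<in>{1..d}. \<bar>b i\<bar> \<le> M - 1" "\<forall>j\<in>{1..n}. \<bar>u j\<bar> \<le> M - 1"
    using assms(2-7) by fastforce+
  then have "aggregate M d n (\<lambda>i. \<Sum>j=1..n. A i j * x j) y t \<noteq> aggregate M d n b u U"
    using aggregate_eq_imp_le[of M d n A b u x y t U] assms(8) False by blast
  with False show ?thesis
    by simp
qed

theorem mainTheorem2: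
  fixes A :: "nat \<Rightarrow> nat \<Rightarrow> int" and b u x s :: "nat \<Rightarrow> int" and d n :: nat
  assumes "d \<ge> 1" and "n \<ge> 1"
    and "maxabs_entry A d n \<ge> 1"
    and "\<forall>j\<in>{1..n}. u j \<ge> 0"
    and "\<forall>j\<in>{1..n}. x j \<ge> 0"
    and "\<forall>j\<in>{1..n+1}. s j \<ge> 0"
  defines "U \<equiv> (\<Sum>j=1..n. u j)"
  defines "M \<equiv> maxabs_entry A d n * U + max (supnorm b d) (supnorm u n) + maxabs_entry A d n + 2"
  shows "((\<forall>i\<in>{1..d}. (\<Sum>j=1..n. A i j * x j) = b i)
          \<and> (\<forall>j\<in>{1..n}. x j + s j = u j)
          \<and> (\<Sum>j=1..n. x j + s j) + s (n+1) = U)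
     \<longleftrightarrow>
         ((\<Sum>i=1..d. M ^ (i - 1) * (\<Sum>j=1..n. A i j * x j))
          + (\<Sum>j=1..n. M ^ (d + j - 1) * (x j + s j))
          + M ^ (d + n) * ((\<Sum>j=1..n. x j + s j) + s (n+1))
          = (\<Sum>i=1..d. M ^ (i - 1) * b i)
          + (\<Sum>j=1..n. M ^ (d + j - 1) * u j)
          + M ^ (d + n) * U)"
proof -
  define D where "D = maxabs_entry A d n"
  have "0 \<le> U"
    unfolding U_def using assms(4) by (intro sum_nonneg) auto
  moreover have "U \<le> D * U"
    using \<open>0 \<le> U\<close> assms(3) mult_right_mono[of 1 D U] unfolding D_def by simp
  moreover have "0 \<le> supnorm u n"
    using abs_le_supnorm[of 1 n u] assms(2) by simp
  ultimately have "D \<le> M - 1" "U < M" "D * U + supnorm b d < M" "supnorm u n < M"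
    using assms(3) unfolding M_def D_def by auto
  then have "\<forall>i\<in>{1..d}. D * U + \<bar>b i\<bar> < M" "\<forall>j\<in>{1..n}. 0 \<le> u j \<and> u j < M"
    using abs_le_supnorm[of _ d b] abs_le_supnorm[of _ n u] assms(4) by fastforce+
  moreover have "\<forall>i\<in>{1..d}. \<forall>j\<in>{1..n}. \<bar>A i j\<bar> \<le> D"
    unfolding D_def by (blast intro: abs_le_maxabs_entry)
  moreover have "(\<Sum>j=1..n. x j + s j) \<le> (\<Sum>j=1..n. x j + s j) + s (n + 1)"
    using assms(6) by simp
  ultimately show ?thesis
    using \<open>0 \<le> U\<close> \<open>D \<le> M - 1\<close> \<open>U < M\<close> assms(3,5,6) unfolding D_def
    by (intro system_iff_aggregate[unfolded aggregate_def]) auto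
qed

end
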